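(* Let $T$ be a DAT with duration vector $d$, and let $v$ be a module of $T$. Let $T^v$ be the DAT obtained from $T$ by deleting all nodes of $T_v$ other than $v$ (together with their incident edges) and turning $v$ into a new leaf $\tilde v$ of type $\mathtt{BAS}$ (keeping its incoming edges and its position in the child orderings of its $\mathtt{SAND}$-parents). Define the duration vector $d^v$ on the BASes of $T^v$ by $d^v_a=d_a$ for $a\in N_{\mathtt{BAS}}\setminus B_v$ and $d^v_{\tilde v}=\mathrm{mt}(T_v,d|_{B_v})$ (where, if this value is $\infty$, one uses the convention that $\mathrm{t}(\mathcal{O},d^v)=\infty$ for any attack $\mathcal{O}$ containing $\tilde v$). Then $$\mathrm{mt}(T,d)=\mathrm{mt}(T^v,d^v).$$
   Context: A dynamic attack tree (DAT) is a finite rooted directed acyclic graph $T=(N,E)$ (edges point from a node to its children) with root $\mathrm{R}_T$, in which each node $v$ has a type $\gamma(v)\in\{\mathtt{BAS},\mathtt{OR},\mathtt{AND},\mathtt{SAND}\}$, with $\gamma(v)=\mathtt{BAS}$ if and only if $v$ is a leaf. Every node of type $\mathtt{SAND}$ comes with a fixed linear ordering $v_1,\dots,v_n$ of its children, written $v=\mathtt{SAND}(v_1,\dots,v_n)$; similarly one writes $v=\mathtt{OR}(v_1,\dots,v_n)$, $v=\mathtt{AND}(v_1,\dots,v_n)$. $N_\gamma$ denotes the set of nodes of type $\gamma$. For a node $v$, $T_v$ is the sub-DAG induced on the descendants of $v$ (all nodes reachable from $v$ by a directed path, including $v$), rooted at $v$, with the inherited types and orderings, and $B_v$ is the set of nodes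 of $T_v$ of type $\mathtt{BAS}$. A module of $T$ is a node $v\in N\setminus N_{\mathtt{BAS}}$ such that every directed path from a node outside $T_v$ to a node of $T_v$ passes through $v$; equivalently, every node of $T_v$ other than $v$ has all its parents inside $T_v$. An attack on $T$ is a pair $\mathcal{O}=(A,\prec)$ where $A\subseteq N_{\mathtt{BAS}}$ and $\prec$ is a strict partial order on $A$. An attack $(A,\prec)$ reaches a node $v$, defined recursively: if $v\in N_{\mathtt{BAS}}$, iff $v\in A$; if $v=\mathtt{OR}(v_1,\dots,v_n)$, iff it reaches some $v_i$; if $v=\mathtt{AND}(v_1,\dots,v_n)$, iff it reaches all $v_i$; if $v=\mathtt{SAND}(v_1,\dots,v_n)$, iff it reaches all $v_i$ and for every $i<n$, every $a\in A\cap B_{v_i}$ and every $a'\in A\cap B_{v_{i+1}}$ one has $a\prec a'$. An attack is successful if it reaches $\mathrm{R}_T$; $\mathcal{S}_T$ is the set of successful attacks. A duration vector is $d\in\mathbb{R}_{\ge0}^{N_{\mathtt{BAS}}}$. For an attack $\mathcal{O}=(A,\prec)$, $\mathrm{t}(\mathcal{O},d)=\max_C\sum_{a\in C}d_a$, the maximum over all maximal chains $C$ of $(A,\prec)$ (equal to $0$ if $A=\varnothing$). The min time is $\mathrm{mt}(T,d)=\min_{\mathcal{O}\in\mathcal{S}_T}\mathrm{t}(\mathcal{O},d)$, which is $\infty$ if $\mathcal{S}_T=\varnothing$. *)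

theory Defs
  imports "HOL-Library.Extended_Real"
begin

datatype ntype = BAS | OR | AND | SAND

text \<open>A DAT: node set, root, node types, and ordered list of children of each node
  (the list order is the SAND ordering; for OR/AND it is irrelevant).\<close>
record 'n dat =
  nodes :: "'n set"
  root  :: 'n
  ntyp  :: "'n \<Rightarrow> ntype"
  chl    :: "'n \<Rightarrow> 'n list"

definition edges :: "'n dat \<Rightarrow> ('n \<times> 'n) set" where
  "edges T = {(u, w). u \<in> nodes T \<and> w \<in> set (chl T u)}"

definition is_dat :: "'n dat \<Rightarrow> bool" where
  "is_dat T \<longleftrightarrow> finite (nodes T) \<and> root T \<in> nodes T
     \<and> (\<forall>u\<in>nodes T. set (chl T u) \<subseteq> nodes T \<and> distinct (chl T u))
     \<and> (\<forall>u\<in>nodes T. ntyp T u = BAS \<longleftrightarrow> chl T u = [])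
     \<and> acyclic (edges T)
     \<and> (\<forall>u\<in>nodes T. (root T, u) \<in> (edges T)\<^sup>*)"

definition desc :: "'n dat \<Rightarrow> 'n \<Rightarrow> 'n set" where
  "desc T v = {w. (v, w) \<in> (edges T)\<^sup>*}"

definition subdat :: "'n dat \<Rightarrow> 'n \<Rightarrow> 'n dat" where
  "subdat T v = T\<lparr>nodes := desc T v, root := v\<rparr>"

definition bas :: "'n dat \<Rightarrow> 'n set" where
  "bas T = {u \<in> nodes T. ntyp T u = BAS}"

definition is_module :: "'n dat \<Rightarrow> 'n \<Rightarrow> bool" where
  "is_module T v \<longleftrightarrow> v \<in> nodes T \<and> ntyp T v \<noteq> BAS
     \<and> (\<forall>w \<in> desc T v - {v}. \<forall>u \<in> nodes T. w \<in> set (chl T u) \<longrightarrow> u \<in> desc T v)"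

definition is_attack :: "'n dat \<Rightarrow> 'n set \<times> ('n \<times> 'n) set \<Rightarrow> bool" where
  "is_attack T O' \<longleftrightarrow> fst O' \<subseteq> bas T \<and> snd O' \<subseteq> fst O' \<times> fst O'
     \<and> (\<forall>a. (a, a) \<notin> snd O') \<and> trans (snd O')"

text \<open>Reachability (the recursive definition, as the least fixed point, which on a DAG
  coincides with the recursion).\<close>
inductive reaches :: "'n dat \<Rightarrow> 'n set \<Rightarrow> ('n \<times> 'n) set \<Rightarrow> 'n \<Rightarrow> bool"
  for T A r where
  r_bas: "ntyp T v = BAS \<Longrightarrow> v \<in> A \<Longrightarrow> reaches T A r v"
| r_or: "ntyp T v = OR \<Longrightarrow> w \<in> set (chl T v) \<Longrightarrow> reaches T A r w \<Longrightarrow> reaches T A r v"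
| r_and: "ntyp T v = AND \<Longrightarrow> (\<forall>w\<in>set (chl T v). reaches T A r w) \<Longrightarrow> reaches T A r v"
| r_sand: "ntyp T v = SAND \<Longrightarrow> (\<forall>w\<in>set (chl T v). reaches T A r w) \<Longrightarrow>
     (\<forall>i. Suc i < length (chl T v) \<longrightarrow>
        (\<forall>a \<in> A \<inter> bas (subdat T (chl T v ! i)).
          \<forall>a' \<in> A \<inter> bas (subdat T (chl T v ! Suc i)). (a, a') \<in> r)) \<Longrightarrow>
     reaches T A r v"

definition successful :: "'n dat \<Rightarrow> ('n set \<times> ('n \<times> 'n) set) set" where
  "successful T = {O'. is_attack T O' \<and> reaches T (fst O') (snd O') (root T)}"

definition is_chain :: "'n set \<times> ('n \<times> 'n) set \<Rightarrow> 'n set \<Rightarrow> bool" where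
  "is_chain O' C \<longleftrightarrow> C \<subseteq> fst O' \<and>
     (\<forall>x\<in>C. \<forall>y\<in>C. x \<noteq> y \<longrightarrow> (x, y) \<in> snd O' \<or> (y, x) \<in> snd O')"

definition is_max_chain :: "'n set \<times> ('n \<times> 'n) set \<Rightarrow> 'n set \<Rightarrow> bool" where
  "is_max_chain O' C \<longleftrightarrow> is_chain O' C \<and> (\<forall>C'. is_chain O' C' \<and> C \<subseteq> C' \<longrightarrow> C' = C)"

text \<open>Attack time; durations are extended reals so that an infinite duration
  (arising from d^v) makes every attack containing that BAS take time \<infinity>.\<close>
definition attack_time :: "'n set \<times> ('n \<times> 'n) set \<Rightarrow> ('n \<Rightarrow> ereal) \<Rightarrow> ereal" where
  "attack_time O' d = Sup {(\<Sum>a\<in>C. d a) | C. is_max_chain O' C}"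

definition min_time :: "'n dat \<Rightarrow> ('n \<Rightarrow> ereal) \<Rightarrow> ereal" where
  "min_time T d = Inf {attack_time O' d | O'. O' \<in> successful T}"

definition contract :: "'n dat \<Rightarrow> 'n \<Rightarrow> 'n dat" where
  "contract T v = T\<lparr>nodes := (nodes T - desc T v) \<union> {v},
                     ntyp := (ntyp T)(v := BAS), chl := (chl T)(v := [])\<rparr>"

definition contract_dur :: "'n dat \<Rightarrow> ('n \<Rightarrow> real) \<Rightarrow> 'n \<Rightarrow> 'n \<Rightarrow> ereal" where
  "contract_dur T d v = (\<lambda>a. if a = v then min_time (subdat T v) (\<lambda>b. ereal (d b))
                              else ereal (d a))"

end

theory Submission
  imports Defs
begin

text \<open>
  Since v is a module, every path into T_v from outside passes through v, so the BASes of T_v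
  interact with the rest of T only through v. A successful attack on T therefore contracts to a
  successful attack on T^v: its BASes inside T_v are replaced by the new leaf v, which inherits
  their joint position in the order, and they form a successful attack on T_v, whose duration is
  at least d^v(v) = mt(T_v). Conversely, substituting an optimal attack on T_v for the leaf v
  expands a successful attack on T^v into one on T, and every chain of the expansion is the union
  of a chain of the attack on T_v and a chain of the attack on T^v with v removed. If T_v has no
  successful attack, every attack on T^v using the leaf v takes infinite time.
\<close>

lemma desc_trans: "w \<in> desc T u \<Longrightarrow> x \<in> desc T w \<Longrightarrow> x \<in> desc T u"
  by (simp add: desc_def)

lemma desc_mono: "w \<in> desc T u \<Longrightarrow> desc T w \<subseteq> desc T u"
  using desc_trans by (metis subsetI)

lemma child_in_desc: "u \<in> nodes T \<Longrightarrow> c \<in> set (chl T u) \<Longrightarrow> c \<in> desc T u"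
  by (auto simp: desc_def edges_def)

lemma desc_subset_nodes:
  assumes "is_dat T" "u \<in> nodes T"
  shows "desc T u \<subseteq> nodes T"
proof
  fix w assume "w \<in> desc T u"
  hence "(u, w) \<in> (edges T)\<^sup>*" by (simp add: desc_def)
  thus "w \<in> nodes T"
  proof induction
    case (step y z)
    thus ?case using assms(1) by (auto simp: is_dat_def edges_def)
  qed (use assms(2) in simp)
qed

lemma bas_subdat: "bas (subdat T c) = {u \<in> desc T c. ntyp T u = BAS}"
  by (simp add: bas_def subdat_def)

lemma desc_subdat:
  assumes "is_dat T" "v \<in> nodes T" "c \<in> desc T v"
  shows "desc (subdat T v) c = desc T c"
proof -
  have edges: "edges (subdat T v) = {(x, y) \<in> edges T. x \<in> desc T v}"
    using desc_subset_nodes[OF assms(1,2)] by (auto simp: edges_def subdat_def)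
  have "(c, w) \<in> (edges (subdat T v))\<^sup>*" if "(c, w) \<in> (edges T)\<^sup>*" for w
    using that
  proof induction
    case (step y z)
    hence "y \<in> desc T v" using assms(3) desc_trans by (auto simp: desc_def)
    thus ?case using step by (simp add: edges rtrancl_into_rtrancl)
  qed simp
  moreover have "edges (subdat T v) \<subseteq> edges T" by (auto simp: edges)
  ultimately show ?thesis by (auto simp: desc_def dest: rtrancl_mono[THEN subsetD])
qed

lemma bas_subdat_subdat:
  "is_dat T \<Longrightarrow> v \<in> nodes T \<Longrightarrow> c \<in> desc T v \<Longrightarrow> bas (subdat (subdat T v) c) = bas (subdat T c)"
  by (simp add: bas_subdat desc_subdat) (simp add: subdat_def)

lemma reaches_BAS_iff: "ntyp T w = BAS \<Longrightarrow> reaches T A r w \<longleftrightarrow> w \<in> A"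
  by (auto elim: reaches.cases intro: reaches.r_bas)

lemma dat_children_nodes: "is_dat T \<Longrightarrow> u \<in> nodes T \<Longrightarrow> set (chl T u) \<subseteq> nodes T"
  by (simp add: is_dat_def)

lemma dat_inner_has_child:
  "is_dat T \<Longrightarrow> u \<in> nodes T \<Longrightarrow> ntyp T u \<noteq> BAS \<Longrightarrow> \<exists>c. c \<in> set (chl T u)"
  by (metis is_dat_def list.set_intros(1) neq_Nil_conv)

lemma bas_subdat_child:
  assumes "u \<in> nodes T" "c \<in> set (chl T u)"
  shows "bas (subdat T c) \<subseteq> bas (subdat T u)"
proof -
  have "desc T c \<subseteq> desc T u" using child_in_desc[OF assms] by (rule desc_mono)
  thus ?thesis by (auto simp: bas_subdat)
qed

lemma reaches_bas_nonempty:
  assumes "is_dat T" "reaches T A r w" "w \<in> nodes T"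
  shows "A \<inter> bas (subdat T w) \<noteq> {}"
  using assms(2,3)
proof induction
  case (r_bas w)
  thus ?case by (auto simp: bas_subdat desc_def)
next
  case (r_or w c)
  thus ?case using bas_subdat_child[OF r_or.prems r_or.hyps(2)] dat_children_nodes[OF assms(1)]
    by blast
next
  case (r_and w)
  then obtain c where c: "c \<in> set (chl T w)" using dat_inner_has_child[OF assms(1)] by fastforce
  thus ?case using r_and bas_subdat_child[OF r_and.prems c] dat_children_nodes[OF assms(1)]
    by blast
next
  case (r_sand w)
  then obtain c where c: "c \<in> set (chl T w)" using dat_inner_has_child[OF assms(1)] by fastforce
  thus ?case using r_sand bas_subdat_child[OF r_sand.prems c] dat_children_nodes[OF assms(1)]
    by blast
qed

lemma reaches_transfer:
  assumes "reaches T A r w" "P w"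
    and stop: "\<And>w. P w \<Longrightarrow> reaches T A r w \<Longrightarrow> ntyp T w = BAS \<or> Q w \<Longrightarrow> reaches T' A' r' w"
    and same: "\<And>w. P w \<Longrightarrow> \<not> Q w \<Longrightarrow> ntyp T w \<noteq> BAS \<Longrightarrow>
      ntyp T' w = ntyp T w \<and> chl T' w = chl T w \<and> (\<forall>c\<in>set (chl T w). P c)"
    and sand: "\<And>w c c'. P w \<Longrightarrow> \<not> Q w \<Longrightarrow> ntyp T w = SAND \<Longrightarrow>
      c \<in> set (chl T w) \<Longrightarrow> c' \<in> set (chl T w) \<Longrightarrow>
      \<forall>a\<in>A \<inter> bas (subdat T c). \<forall>a'\<in>A \<inter> bas (subdat T c'). (a, a') \<in> r \<Longrightarrow>
      \<forall>a\<in>A' \<inter> bas (subdat T' c). \<forall>a'\<in>A' \<inter> bas (subdat T' c'). (a, a') \<in> r'"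
  shows "reaches T' A' r' w"
  using assms(1,2)
proof induction
  case (r_bas w)
  thus ?case using stop[of w] reaches.r_bas[of T w A r] by blast
next
  case (r_or w c)
  show ?case
  proof (cases "Q w")
    case True
    thus ?thesis using stop[of w] r_or reaches.r_or[of T w] by blast
  next
    case False
    with same[OF r_or.prems] r_or show ?thesis by (auto intro: reaches.r_or)
  qed
next
  case (r_and w)
  show ?case
  proof (cases "Q w")
    case True
    thus ?thesis using stop[of w] r_and reaches.r_and[of T w] by blast
  next
    case False
    with same[OF r_and.prems] r_and show ?thesis by (auto intro: reaches.r_and)
  qed
next
  case (r_sand w)
  show ?case
  proof (cases "Q w")
    case True
    thus ?thesis using stop[of w] r_sand reaches.r_sand[of T w] by blast
  next
    case False
    note w = same[OF r_sand.prems False] r_sand.hyps(1)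
    show ?thesis
    proof (rule reaches.r_sand)
      show "\<forall>c\<in>set (chl T' w). reaches T' A' r' c" using w r_sand.IH by auto
      show "\<forall>i. Suc i < length (chl T' w) \<longrightarrow>
          (\<forall>a\<in>A' \<inter> bas (subdat T' (chl T' w ! i)).
            \<forall>a'\<in>A' \<inter> bas (subdat T' (chl T' w ! Suc i)). (a, a') \<in> r')"
      proof (intro allI impI)
        fix i assume i: "Suc i < length (chl T' w)"
        hence "chl T w ! i \<in> set (chl T w)" "chl T w ! Suc i \<in> set (chl T w)"
          using w by (simp_all add: nth_mem)
        from sand[OF r_sand.prems False r_sand.hyps(1) this] r_sand.hyps(2) i w
        show "\<forall>a\<in>A' \<inter> bas (subdat T' (chl T' w ! i)).
            \<forall>a'\<in>A' \<inter> bas (subdat T' (chl T' w ! Suc i)). (a, a') \<in> r'"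
          by simp
      qed
    qed (use w in simp)
  qed
qed

lemma successfulD:
  assumes "(A, r) \<in> successful X"
  shows "A \<subseteq> bas X" "r \<subseteq> A \<times> A" "\<forall>a. (a, a) \<notin> r" "trans r" "reaches X A r (root X)"
  using assms by (simp_all add: successful_def is_attack_def)

lemma is_chain_transfer:
  assumes "is_chain O1 C" "C \<subseteq> fst O2"
    and "\<And>x y. x \<in> C \<Longrightarrow> y \<in> C \<Longrightarrow> (x, y) \<in> snd O1 \<Longrightarrow> (x, y) \<in> snd O2"
  shows "is_chain O2 C"
  using assms unfolding is_chain_def by blast

lemma is_chain_subset: "is_chain O' C \<Longrightarrow> C' \<subseteq> C \<Longrightarrow> is_chain O' C'"
  unfolding is_chain_def by blast

lemma is_chain_Un:
  assumes "is_chain O' C1" "is_chain O' C2"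
    and "\<And>x y. x \<in> C1 \<Longrightarrow> y \<in> C2 \<Longrightarrow> x \<noteq> y \<Longrightarrow> (x, y) \<in> snd O' \<or> (y, x) \<in> snd O'"
  shows "is_chain O' (C1 \<union> C2)"
  using assms unfolding is_chain_def by (simp add: Ball_def) blast

lemma ex_max_chain_superset:
  assumes "finite (fst O')" "is_chain O' C"
  shows "\<exists>C'. is_max_chain O' C' \<and> C \<subseteq> C'"
proof -
  let ?F = "{C'. is_chain O' C' \<and> C \<subseteq> C'}"
  have "?F \<subseteq> Pow (fst O')" by (auto simp: is_chain_def)
  hence "finite ?F" using assms(1) by (meson finite_Pow_iff finite_subset)
  moreover have "?F \<noteq> {}" using assms(2) by blast
  ultimately obtain M where M: "M \<in> ?F" "\<forall>C'\<in>?F. M \<le> C' \<longrightarrow> M = C'"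
    by (meson finite_has_maximal)
  have "is_max_chain O' M" unfolding is_max_chain_def
  proof (intro conjI allI impI)
    show "is_chain O' M" using M(1) by simp
    fix C' assume "is_chain O' C' \<and> M \<subseteq> C'"
    thus "C' = M" using M by (metis (mono_tags, lifting) mem_Collect_eq order_trans)
  qed
  thus ?thesis using M(1) by blast
qed

lemma chain_sum_le_attack_time:
  fixes d :: "'n \<Rightarrow> ereal"
  assumes "finite (fst O')" "\<forall>a\<in>fst O'. 0 \<le> d a" "is_chain O' C"
  shows "sum d C \<le> attack_time O' d"
proof -
  obtain M where M: "is_max_chain O' M" "C \<subseteq> M"
    using ex_max_chain_superset[OF assms(1,3)] by blast
  have "M \<subseteq> fst O'" using M(1) by (simp add: is_max_chain_def is_chain_def)
  hence "finite M" "\<forall>a\<in>M. 0 \<le> d a" using assms(1,2) finite_subset by auto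
  hence "sum d C \<le> sum d M" using M(2) by (intro sum_mono2) auto
  also have "\<dots> \<le> attack_time O' d"
    unfolding attack_time_def using M(1) by (intro Sup_upper) blast
  finally show ?thesis .
qed

lemma attack_time_le:
  fixes d :: "'n \<Rightarrow> ereal"
  assumes "\<And>C. is_chain O' C \<Longrightarrow> sum d C \<le> X"
  shows "attack_time O' d \<le> X"
  unfolding attack_time_def using assms by (intro Sup_least) (auto simp: is_max_chain_def)

lemma attack_time_attained:
  fixes d :: "'n \<Rightarrow> ereal"
  assumes "finite (fst O')"
  shows "\<exists>C. is_chain O' C \<and> attack_time O' d = sum d C"
proof -
  let ?S = "(\<lambda>C. sum d C) ` {C. is_max_chain O' C}"
  have "{C. is_max_chain O' C} \<subseteq> Pow (fst O')" by (auto simp: is_max_chain_def is_chain_def)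
  hence "finite ?S" using assms by (meson finite_Pow_iff finite_subset finite_imageI)
  moreover have "?S \<noteq> {}"
    using ex_max_chain_superset[OF assms, of "{}"] by (auto simp: is_chain_def)
  ultimately have "Sup ?S \<in> ?S" by (metis Max_in cSup_eq_Max)
  moreover have "attack_time O' d = Sup ?S" unfolding attack_time_def by (rule arg_cong[where f = Sup]) blast
  ultimately show ?thesis by (auto simp: is_max_chain_def)
qed

lemma min_time_le: "O' \<in> successful T \<Longrightarrow> min_time T d \<le> attack_time O' d"
  unfolding min_time_def by (intro Inf_lower) blast

lemma min_time_greatest:
  "(\<And>O'. O' \<in> successful T \<Longrightarrow> m \<le> attack_time O' d) \<Longrightarrow> m \<le> min_time T d"
  unfolding min_time_def by (intro Inf_greatest) blast

lemma min_time_empty: "successful T = {} \<Longrightarrow> min_time T d = \<infinity>"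
  by (simp add: min_time_def top_ereal_def)

lemma finite_successful: "finite (bas T) \<Longrightarrow> finite (successful T)"
proof -
  assume "finite (bas T)"
  moreover have "successful T \<subseteq> Pow (bas T) \<times> Pow (bas T \<times> bas T)"
    by (auto simp: successful_def is_attack_def)
  ultimately show ?thesis by (meson finite_Pow_iff finite_SigmaI finite_subset)
qed

lemma min_time_attained:
  assumes "finite (bas T)" "successful T \<noteq> {}"
  shows "\<exists>O'\<in>successful T. min_time T d = attack_time O' d"
proof -
  let ?S = "(\<lambda>O'. attack_time O' d) ` successful T"
  have "Inf ?S \<in> ?S"
    using finite_successful[OF assms(1)] assms(2) by (metis Min_in cInf_eq_Min finite_imageI image_is_empty)
  moreover have "min_time T d = Inf ?S" unfolding min_time_def by (rule arg_cong[where f = Inf]) blast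
  ultimately show ?thesis by auto
qed

lemma min_time_nonneg:
  fixes d :: "'n \<Rightarrow> ereal"
  assumes "finite (bas T)" "\<forall>a\<in>bas T. 0 \<le> d a"
  shows "0 \<le> min_time T d"
proof (rule min_time_greatest)
  fix O' assume "O' \<in> successful T"
  hence "fst O' \<subseteq> bas T" by (simp add: successful_def is_attack_def)
  hence "finite (fst O')" "\<forall>a\<in>fst O'. 0 \<le> d a" using assms rev_finite_subset by auto
  from chain_sum_le_attack_time[OF this, of "{}"] show "0 \<le> attack_time O' d"
    by (simp add: is_chain_def)
qed

lemma strict_order_lift:
  assumes "\<forall>a. (a, a) \<notin> r" "trans r" "\<And>x. x \<in> X \<Longrightarrow> L x \<noteq> {}"
  defines "R \<equiv> {(x, y). x \<in> X \<and> y \<in> X \<and> (\<forall>a\<in>L x. \<forall>b\<in>L y. (a, b) \<in> r)}"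
  shows "(\<forall>x. (x, x) \<notin> R) \<and> trans R"
proof
  show "\<forall>x. (x, x) \<notin> R"
  proof (intro allI notI)
    fix x assume "(x, x) \<in> R"
    moreover from this obtain a where "a \<in> L x" using assms(3) unfolding R_def by blast
    ultimately show False using assms(1) unfolding R_def by blast
  qed
  show "trans R"
  proof (rule transI)
    fix x y z assume xy: "(x, y) \<in> R" and yz: "(y, z) \<in> R"
    obtain b where b: "b \<in> L y" using xy assms(3) unfolding R_def by blast
    have "(a, c) \<in> r" if "a \<in> L x" "c \<in> L z" for a c
      using xy yz b that assms(2) unfolding R_def trans_def by blast
    thus "(x, z) \<in> R" using xy yz unfolding R_def by blast
  qed
qed

lemma strict_order_substitute:
  fixes f :: "'a \<Rightarrow> 'b" and X :: "'a set"
  assumes "\<forall>a. (a, a) \<notin> r" "trans r" "\<forall>a. (a, a) \<notin> s" "trans s"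
  defines "R \<equiv> {(x, y). x \<in> X \<and> y \<in> X \<and> ((f x, f y) \<in> r \<or> f x = f y \<and> (x, y) \<in> s)}"
  shows "(\<forall>x. (x, x) \<notin> R) \<and> trans R"
proof
  show "\<forall>x. (x, x) \<notin> R" using assms(1,3) by (simp add: R_def)
  show "trans R"
  proof (rule transI)
    fix x y z assume xy: "(x, y) \<in> R" and yz: "(y, z) \<in> R"
    have r_trans: "(a, c) \<in> r" if "(a, b) \<in> r" "(b, c) \<in> r" for a b c
      using assms(2) that by (rule transD)
    have s_trans: "(a, c) \<in> s" if "(a, b) \<in> s" "(b, c) \<in> s" for a b c
      using assms(4) that by (rule transD)
    have "(f x, f y) \<in> r \<or> f x = f y \<and> (x, y) \<in> s" "(f y, f z) \<in> r \<or> f y = f z \<and> (y, z) \<in> s"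
      using xy yz by (simp_all add: R_def)
    hence "(f x, f z) \<in> r \<or> f x = f z \<and> (x, z) \<in> s" by (metis r_trans s_trans)
    thus "(x, z) \<in> R" using xy yz by (simp add: R_def)
  qed
qed

locale dat_module =
  fixes T :: "'n dat" and v :: 'n
  assumes dat: "is_dat T" and module: "is_module T v"
begin

abbreviation D :: "'n set" where "D \<equiv> desc T v"
abbreviation Tv :: "'n dat" where "Tv \<equiv> subdat T v"
abbreviation Tc :: "'n dat" where "Tc \<equiv> contract T v"

lemma contract_sel [simp]:
  "nodes Tc = nodes T - D \<union> {v}" "root Tc = root T"
  "ntyp Tc = (ntyp T)(v := BAS)" "chl Tc = (chl T)(v := [])"
  by (simp_all add: contract_def)

lemma subdat_sel [simp]: "nodes Tv = D" "root Tv = v" "ntyp Tv = ntyp T" "chl Tv = chl T"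
  by (simp_all add: subdat_def)

lemma v_in_nodes: "v \<in> nodes T" and v_not_BAS: "ntyp T v \<noteq> BAS"
  using module by (simp_all add: is_module_def)

lemma v_in_D: "v \<in> D"
  by (simp add: desc_def)

lemma D_subset_nodes: "D \<subseteq> nodes T"
  using desc_subset_nodes[OF dat v_in_nodes] .

lemma module_parent: "w \<in> D \<Longrightarrow> w \<noteq> v \<Longrightarrow> u \<in> nodes T \<Longrightarrow> w \<in> set (chl T u) \<Longrightarrow> u \<in> D"
  using module unfolding is_module_def by blast

lemma D_children: "w \<in> D \<Longrightarrow> c \<in> set (chl T w) \<Longrightarrow> c \<in> D"
  using D_subset_nodes by (blast intro: desc_trans child_in_desc)

lemma bas_subdat_subset_D: "c \<in> D \<Longrightarrow> bas (subdat T c) \<subseteq> D"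
  using desc_mono by (fastforce simp: bas_subdat)

lemma bas_subdat_Tv: "c \<in> D \<Longrightarrow> bas (subdat Tv c) = bas (subdat T c)"
  using bas_subdat_subdat[OF dat v_in_nodes] .

lemma bas_Tv: "bas Tv = bas T \<inter> D"
  using D_subset_nodes by (auto simp: bas_def)

lemma bas_Tc: "bas Tc = insert v (bas T - D)"
  using v_in_nodes v_in_D by (auto simp: bas_def)

lemma finite_bas: "finite (bas T)" "finite (bas Tv)" "finite (bas Tc)"
proof -
  have "finite (nodes T)" using dat by (simp add: is_dat_def)
  thus "finite (bas T)" by (rule rev_finite_subset) (auto simp: bas_def)
  thus "finite (bas Tv)" "finite (bas Tc)" by (simp_all add: bas_Tv bas_Tc)
qed

lemma edges_contract: "edges Tc = {(x, y) \<in> edges T. x \<notin> D}"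
  using v_in_D by (auto simp: edges_def split: if_splits)

lemma contract_children: "w \<in> nodes Tc \<Longrightarrow> w \<noteq> v \<Longrightarrow> c \<in> set (chl T w) \<Longrightarrow> c \<in> nodes Tc"
  using dat_children_nodes[OF dat] module_parent by fastforce

lemma path_avoiding_D:
  assumes "(c, w) \<in> (edges T)\<^sup>*" "w \<notin> D"
  shows "(c, w) \<in> (edges Tc)\<^sup>*"
  using assms(1)
proof (induction rule: converse_rtrancl_induct)
  case (step y z)
  have "(y, w) \<in> (edges T)\<^sup>*" using step.hyps by (rule converse_rtrancl_into_rtrancl)
  hence "w \<in> desc T y" by (simp add: desc_def)
  hence "y \<notin> D" using assms(2) desc_trans[of y T v w] by blast
  hence "(y, z) \<in> edges Tc" using step.hyps(1) by (simp add: edges_contract)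
  thus ?case using step.IH by (rule converse_rtrancl_into_rtrancl)
qed simp

lemma path_entering_D:
  assumes "(c, x) \<in> (edges T)\<^sup>*" "x \<in> D" "c \<notin> D"
  shows "(c, v) \<in> (edges Tc)\<^sup>*"
  using assms(1,3)
proof (induction rule: converse_rtrancl_induct)
  case (step y z)
  have y: "y \<in> nodes T" "z \<in> set (chl T y)" using step.hyps(1) by (simp_all add: edges_def)
  show ?case
  proof (cases "z \<in> D")
    case True
    hence "z = v" using module_parent[OF _ _ y] step.prems by blast
    hence "(y, v) \<in> edges Tc" using step.hyps(1) step.prems by (simp add: edges_contract)
    thus ?thesis by (rule r_into_rtrancl)
  next
    case False
    hence "(y, z) \<in> edges Tc" using step.hyps(1) step.prems by (simp add: edges_contract)
    thus ?thesis using step.IH[OF False] by (rule converse_rtrancl_into_rtrancl)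
  qed
qed (use assms(2) in simp)

lemma v_in_desc_contract: "c \<in> nodes Tc \<Longrightarrow> x \<in> desc T c \<Longrightarrow> x \<in> D \<Longrightarrow> v \<in> desc Tc c"
  using path_entering_D by (cases "c = v") (auto simp: desc_def)

lemma desc_contract_subset: "desc Tc c \<subseteq> desc T c"
  unfolding desc_def using rtrancl_mono[of "edges Tc" "edges T"] by (auto simp: edges_contract)

lemma desc_contract:
  assumes "c \<in> nodes Tc"
  shows "desc Tc c = desc T c - (D - {v})"
proof
  show "desc Tc c \<subseteq> desc T c - (D - {v})"
  proof
    fix w assume "w \<in> desc Tc c"
    hence "(c, w) \<in> (edges Tc)\<^sup>*" by (simp add: desc_def)
    hence "w \<notin> D - {v}"
    proof (induction rule: rtrancl_induct)
      case (step y z)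
      thus ?case using module_parent[of z y] unfolding edges_contract by (auto simp: edges_def)
    qed (use assms in auto)
    thus "w \<in> desc T c - (D - {v})" using \<open>w \<in> desc Tc c\<close> desc_contract_subset by blast
  qed
  show "desc T c - (D - {v}) \<subseteq> desc Tc c"
  proof
    fix w assume w: "w \<in> desc T c - (D - {v})"
    show "w \<in> desc Tc c"
    proof (cases "w \<in> D")
      case True
      thus ?thesis using w v_in_desc_contract[OF assms] by blast
    next
      case False
      thus ?thesis using w path_avoiding_D by (simp add: desc_def)
    qed
  qed
qed

lemma bas_subdat_contract:
  "c \<in> nodes Tc \<Longrightarrow> bas (subdat Tc c) = bas (subdat T c) - D \<union> {v} \<inter> desc T c"
  using v_not_BAS v_in_D by (auto simp: bas_subdat desc_contract)

lemma root_in_contract: "root T \<in> nodes Tc"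
proof -
  have root: "root T \<in> nodes T" "(root T, v) \<in> (edges T)\<^sup>*"
    using dat v_in_nodes by (simp_all add: is_dat_def)
  have "root T = v" if "root T \<in> D"
  proof (rule ccontr)
    assume "root T \<noteq> v"
    hence "(root T, v) \<in> (edges T)\<^sup>+" using root(2) by (meson rtranclD)
    moreover have "(v, root T) \<in> (edges T)\<^sup>*" using that by (simp add: desc_def)
    ultimately have "(root T, root T) \<in> (edges T)\<^sup>+" by (rule trancl_rtrancl_trancl)
    thus False using dat by (simp add: is_dat_def acyclic_def)
  qed
  thus ?thesis using root(1) by auto
qed

lemma reaches_restrict:
  assumes "reaches T A r w" "w \<in> D"
  shows "reaches Tv (A \<inter> D) (Restr r (A \<inter> D)) w"
  using assms
proof (rule reaches_transfer[where P = "\<lambda>w. w \<in> D" and Q = "\<lambda>_. False"])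
  fix w assume "w \<in> D" "reaches T A r w" "ntyp T w = BAS \<or> False"
  thus "reaches Tv (A \<inter> D) (Restr r (A \<inter> D)) w" by (simp add: reaches_BAS_iff)
next
  fix w assume "w \<in> D"
  thus "ntyp Tv w = ntyp T w \<and> chl Tv w = chl T w \<and> (\<forall>c\<in>set (chl T w). c \<in> D)"
    using D_children by simp
next
  fix w c c' assume "w \<in> D" "c \<in> set (chl T w)" "c' \<in> set (chl T w)"
    and "\<forall>a\<in>A \<inter> bas (subdat T c). \<forall>a'\<in>A \<inter> bas (subdat T c'). (a, a') \<in> r"
  thus "\<forall>a\<in>A \<inter> D \<inter> bas (subdat Tv c). \<forall>a'\<in>A \<inter> D \<inter> bas (subdat Tv c').
      (a, a') \<in> Restr r (A \<inter> D)"
    using D_children bas_subdat_Tv by auto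
qed

lemma reaches_extend:
  assumes "reaches Tv B s w" "w \<in> D" "A \<inter> D = B" "s \<subseteq> r"
  shows "reaches T A r w"
  using assms(1,2)
proof (rule reaches_transfer[where P = "\<lambda>w. w \<in> D" and Q = "\<lambda>_. False"])
  fix w assume "w \<in> D" "reaches Tv B s w" "ntyp Tv w = BAS \<or> False"
  thus "reaches T A r w" using assms(3) by (auto simp: reaches_BAS_iff)
next
  fix w assume "w \<in> D"
  thus "ntyp T w = ntyp Tv w \<and> chl T w = chl Tv w \<and> (\<forall>c\<in>set (chl Tv w). c \<in> D)"
    using D_children by simp
next
  fix w c c' assume "w \<in> D" "c \<in> set (chl Tv w)" "c' \<in> set (chl Tv w)"
    and "\<forall>a\<in>B \<inter> bas (subdat Tv c). \<forall>a'\<in>B \<inter> bas (subdat Tv c'). (a, a') \<in> s"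
  moreover have "c \<in> D" "c' \<in> D" using calculation(1-3) D_children by auto
  ultimately show "\<forall>a\<in>A \<inter> bas (subdat T c). \<forall>a'\<in>A \<inter> bas (subdat T c'). (a, a') \<in> r"
    using assms(3,4) bas_subdat_Tv bas_subdat_subset_D by blast
qed

text \<open>
  The contraction of an attack (A, r): BASes inside T_v are replaced by v, present iff (A, r)
  reaches v, and v is ordered against another BAS as the whole block \<open>A \<inter> D\<close> is.
\<close>

definition uncontract :: "'n set \<Rightarrow> 'n \<Rightarrow> 'n set" where
  "uncontract A x = (if x = v then A \<inter> D else {x})"

definition contract_set :: "'n set \<Rightarrow> ('n \<times> 'n) set \<Rightarrow> 'n set" where
  "contract_set A r = A - D \<union> (if reaches T A r v then {v} else {})"

definition contract_rel :: "'n set \<Rightarrow> ('n \<times> 'n) set \<Rightarrow> ('n \<times> 'n) set" where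
  "contract_rel A r = {(x, y). x \<in> contract_set A r \<and> y \<in> contract_set A r \<and>
     (\<forall>a\<in>uncontract A x. \<forall>b\<in>uncontract A y. (a, b) \<in> r)}"

lemma uncontract_nonempty:
  assumes "x \<in> contract_set A r"
  shows "uncontract A x \<noteq> {}"
proof (cases "x = v")
  case True
  hence "reaches T A r v" using assms v_in_D by (simp add: contract_set_def split: if_splits)
  hence "A \<inter> bas (subdat T v) \<noteq> {}" using reaches_bas_nonempty[OF dat _ v_in_nodes] by blast
  thus ?thesis using True bas_subdat_subset_D[OF v_in_D] by (auto simp: uncontract_def)
qed (simp add: uncontract_def)

lemma uncontract_subset_bas_subdat:
  assumes "A \<subseteq> bas T" "c \<in> nodes Tc" "x \<in> contract_set A r" "x \<in> bas (subdat Tc c)"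
  shows "uncontract A x \<subseteq> A \<inter> bas (subdat T c)"
proof (cases "x = v")
  case True
  hence "v \<in> desc T c" using assms(4) bas_subdat_contract[OF assms(2)] v_in_D by blast
  hence "D \<subseteq> desc T c" by (rule desc_mono)
  thus ?thesis using True assms(1) unfolding uncontract_def bas_subdat by (auto simp: bas_def)
next
  case False
  thus ?thesis using assms(3,4) bas_subdat_contract[OF assms(2)]
    by (auto simp: uncontract_def contract_set_def split: if_splits)
qed

lemma reaches_contract:
  assumes "A \<subseteq> bas T" "reaches T A r w" "w \<in> nodes Tc"
  shows "reaches Tc (contract_set A r) (contract_rel A r) w"
  using assms(2,3)
proof (rule reaches_transfer[where P = "\<lambda>w. w \<in> nodes Tc" and Q = "\<lambda>w. w = v"])
  fix w assume "w \<in> nodes Tc" "reaches T A r w" "ntyp T w = BAS \<or> w = v"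
  thus "reaches Tc (contract_set A r) (contract_rel A r) w"
    by (cases "w = v") (auto simp: reaches_BAS_iff contract_set_def)
next
  fix w assume "w \<in> nodes Tc" "w \<noteq> v"
  thus "ntyp Tc w = ntyp T w \<and> chl Tc w = chl T w \<and> (\<forall>c\<in>set (chl T w). c \<in> nodes Tc)"
    using contract_children by simp
next
  fix w c c' assume w: "w \<in> nodes Tc" "w \<noteq> v" and c: "c \<in> set (chl T w)" "c' \<in> set (chl T w)"
    and ordered: "\<forall>a\<in>A \<inter> bas (subdat T c). \<forall>a'\<in>A \<inter> bas (subdat T c'). (a, a') \<in> r"
  have "c \<in> nodes Tc" "c' \<in> nodes Tc" using contract_children[OF w] c by auto
  with ordered show "\<forall>x\<in>contract_set A r \<inter> bas (subdat Tc c).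
      \<forall>y\<in>contract_set A r \<inter> bas (subdat Tc c'). (x, y) \<in> contract_rel A r"
    using uncontract_subset_bas_subdat[OF assms(1)] unfolding contract_rel_def by blast
qed

lemma contract_successful:
  assumes "(A, r) \<in> successful T"
  shows "(contract_set A r, contract_rel A r) \<in> successful Tc"
proof -
  note A = successfulD[OF assms]
  have "(\<forall>x. (x, x) \<notin> contract_rel A r) \<and> trans (contract_rel A r)"
    unfolding contract_rel_def using strict_order_lift[OF A(3,4) uncontract_nonempty] .
  moreover have "contract_set A r \<subseteq> bas Tc" using A(1) by (auto simp: contract_set_def bas_Tc)
  moreover have "contract_rel A r \<subseteq> contract_set A r \<times> contract_set A r"
    by (auto simp: contract_rel_def)
  moreover have "reaches Tc (contract_set A r) (contract_rel A r) (root Tc)"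
    using reaches_contract[OF A(1,5) root_in_contract] by simp
  ultimately show ?thesis by (simp add: successful_def is_attack_def)
qed

lemma restrict_successful:
  assumes "(A, r) \<in> successful T" "reaches T A r v"
  shows "(A \<inter> D, Restr r (A \<inter> D)) \<in> successful Tv"
  using successfulD[OF assms(1)] reaches_restrict[OF assms(2) v_in_D]
  by (auto simp: successful_def is_attack_def bas_Tv trans_def)

lemma contract_chain_off_v:
  assumes "is_chain (contract_set A r, contract_rel A r) C"
  shows "is_chain (A, r) (C - {v})"
proof (rule is_chain_transfer[OF is_chain_subset[OF assms]])
  show "C - {v} \<subseteq> fst (A, r)"
    using assms by (auto simp: is_chain_def contract_set_def split: if_splits)
  fix x y assume "x \<in> C - {v}" "y \<in> C - {v}"
    "(x, y) \<in> snd (contract_set A r, contract_rel A r)"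
  thus "(x, y) \<in> snd (A, r)" by (auto simp: contract_rel_def uncontract_def)
qed auto

lemma contract_chain_uncontract:
  assumes "is_chain (contract_set A r, contract_rel A r) C" "v \<in> C"
    and "is_chain (A \<inter> D, Restr r (A \<inter> D)) C'"
  shows "is_chain (A, r) (C - {v} \<union> C')"
proof (rule is_chain_Un[OF contract_chain_off_v[OF assms(1)]])
  show "is_chain (A, r) C'"
    using assms(3) by (rule is_chain_transfer) (use assms(3) in \<open>auto simp: is_chain_def\<close>)
  fix x y assume x: "x \<in> C - {v}" and y: "y \<in> C'"
  have "(x, v) \<in> contract_rel A r \<or> (v, x) \<in> contract_rel A r"
    using assms(1,2) x by (simp add: is_chain_def)
  moreover have "y \<in> uncontract A v" using assms(3) y by (auto simp: is_chain_def uncontract_def)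
  moreover have "uncontract A x = {x}" using x by (simp add: uncontract_def)
  ultimately show "(x, y) \<in> snd (A, r) \<or> (y, x) \<in> snd (A, r)" by (auto simp: contract_rel_def)
qed

text \<open>
  The expansion of an attack (A', r') on T^v by an attack (B, s) on T_v: the BASes of B take
  the place of v with respect to r', and are ordered among themselves by s.
\<close>

definition collapse :: "'n set \<Rightarrow> 'n \<Rightarrow> 'n" where
  "collapse B x = (if x \<in> B then v else x)"

definition expand_set :: "'n set \<Rightarrow> 'n set \<Rightarrow> 'n set" where
  "expand_set A' B = A' - {v} \<union> B"

definition expand_rel :: "'n set \<Rightarrow> ('n \<times> 'n) set \<Rightarrow> 'n set \<Rightarrow> ('n \<times> 'n) set \<Rightarrow> ('n \<times> 'n) set"
  where
  "expand_rel A' r' B s = {(x, y). x \<in> expand_set A' B \<and> y \<in> expand_set A' B \<and>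
     ((collapse B x, collapse B y) \<in> r' \<or> collapse B x = collapse B y \<and> (x, y) \<in> s)}"

context
  fixes A' r' B s
  assumes outer: "(A', r') \<in> successful Tc"
    and inner: "is_attack Tv (B, s)"
    and inner_nonempty: "B \<noteq> {} \<Longrightarrow> v \<in> A'"
    and inner_reaches: "v \<in> A' \<Longrightarrow> reaches Tv B s v"
begin

lemma inner_subset: "B \<subseteq> bas T \<inter> D"
  using inner by (simp add: is_attack_def bas_Tv)

lemma outer_subset: "A' - {v} \<subseteq> bas T - D"
  using successfulD(1)[OF outer] by (auto simp: bas_Tc)

lemma collapse_bas_subdat:
  assumes "c \<in> nodes Tc" "x \<in> expand_set A' B" "x \<in> bas (subdat T c)"
  shows "collapse B x \<in> A' \<inter> bas (subdat Tc c)"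
proof (cases "x \<in> B")
  case True
  hence "v \<in> desc Tc c"
    using v_in_desc_contract[OF assms(1)] assms(3) inner_subset by (auto simp: bas_subdat)
  hence "v \<in> bas (subdat Tc c)"
    using desc_contract_subset bas_subdat_contract[OF assms(1)] by blast
  thus ?thesis using True inner_nonempty by (auto simp: collapse_def)
next
  case False
  thus ?thesis using assms(2,3) outer_subset bas_subdat_contract[OF assms(1)]
    by (auto simp: collapse_def expand_set_def)
qed

lemma expand_order: "(\<forall>x. (x, x) \<notin> expand_rel A' r' B s) \<and> trans (expand_rel A' r' B s)"
  unfolding expand_rel_def using successfulD(3,4)[OF outer] inner
  by (intro strict_order_substitute) (simp_all add: is_attack_def)

lemma reaches_expand:
  assumes "reaches Tc A' r' w" "w \<in> nodes Tc"
  shows "reaches T (expand_set A' B) (expand_rel A' r' B s) w"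
  using assms
proof (rule reaches_transfer[where P = "\<lambda>w. w \<in> nodes Tc" and Q = "\<lambda>w. w = v"])
  fix w assume w: "w \<in> nodes Tc" "reaches Tc A' r' w" "ntyp Tc w = BAS \<or> w = v"
  show "reaches T (expand_set A' B) (expand_rel A' r' B s) w"
  proof (cases "w = v")
    case True
    hence "reaches Tv B s v" using w(2) inner_reaches by (simp add: reaches_BAS_iff)
    moreover have "expand_set A' B \<inter> D = B"
      using outer_subset inner_subset by (auto simp: expand_set_def)
    moreover have "s \<subseteq> expand_rel A' r' B s"
      using inner by (auto simp: is_attack_def expand_set_def expand_rel_def collapse_def)
    ultimately show ?thesis using True reaches_extend v_in_D by blast
  next
    case False
    thus ?thesis using w by (simp add: reaches_BAS_iff expand_set_def)
  qed
next
  fix w assume "w \<in> nodes Tc" "w \<noteq> v"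
  thus "ntyp T w = ntyp Tc w \<and> chl T w = chl Tc w \<and> (\<forall>c\<in>set (chl Tc w). c \<in> nodes Tc)"
    using contract_children by simp
next
  fix w c c' assume w: "w \<in> nodes Tc" "w \<noteq> v" and c: "c \<in> set (chl Tc w)" "c' \<in> set (chl Tc w)"
    and ordered: "\<forall>a\<in>A' \<inter> bas (subdat Tc c). \<forall>a'\<in>A' \<inter> bas (subdat Tc c'). (a, a') \<in> r'"
  have "c \<in> nodes Tc" "c' \<in> nodes Tc" using contract_children[OF w] c w(2) by auto
  with ordered show "\<forall>x\<in>expand_set A' B \<inter> bas (subdat T c).
      \<forall>y\<in>expand_set A' B \<inter> bas (subdat T c'). (x, y) \<in> expand_rel A' r' B s"
    using collapse_bas_subdat unfolding expand_rel_def by blast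
qed

lemma expand_successful: "(expand_set A' B, expand_rel A' r' B s) \<in> successful T"
proof -
  have "expand_set A' B \<subseteq> bas T" using outer_subset inner_subset by (auto simp: expand_set_def)
  moreover have "expand_rel A' r' B s \<subseteq> expand_set A' B \<times> expand_set A' B"
    by (auto simp: expand_rel_def)
  moreover have "reaches T (expand_set A' B) (expand_rel A' r' B s) (root T)"
    using reaches_expand successfulD(5)[OF outer] root_in_contract by simp
  ultimately show ?thesis using expand_order by (simp add: successful_def is_attack_def)
qed

lemma v_notin_expand_set: "v \<notin> expand_set A' B"
  using inner_subset v_not_BAS by (auto simp: expand_set_def bas_def)

lemma expand_chain_collapse:
  assumes "is_chain (expand_set A' B, expand_rel A' r' B s) C"
  shows "is_chain (A', r') (collapse B ` C)"
  unfolding is_chain_def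
proof (intro conjI ballI impI)
  have "C \<subseteq> expand_set A' B" using assms by (simp add: is_chain_def)
  thus "collapse B ` C \<subseteq> fst (A', r')"
    using inner_nonempty by (auto simp: expand_set_def collapse_def)
  fix x y assume "x \<in> collapse B ` C" "y \<in> collapse B ` C" "x \<noteq> y"
  then obtain a b where ab: "a \<in> C" "b \<in> C" "x = collapse B a" "y = collapse B b" "a \<noteq> b"
    by blast
  hence "(a, b) \<in> expand_rel A' r' B s \<or> (b, a) \<in> expand_rel A' r' B s"
    using assms by (simp add: is_chain_def)
  thus "(x, y) \<in> snd (A', r') \<or> (y, x) \<in> snd (A', r')"
    using ab \<open>x \<noteq> y\<close> by (auto simp: expand_rel_def)
qed

lemma expand_chain_inner:
  assumes "is_chain (expand_set A' B, expand_rel A' r' B s) C"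
  shows "is_chain (B, s) (C \<inter> B)"
proof (rule is_chain_transfer[OF is_chain_subset[OF assms]])
  fix x y assume "x \<in> C \<inter> B" "y \<in> C \<inter> B" "(x, y) \<in> snd (expand_set A' B, expand_rel A' r' B s)"
  thus "(x, y) \<in> snd (B, s)"
    using successfulD(3)[OF outer] by (auto simp: expand_rel_def collapse_def)
qed auto

lemma expand_sum_le:
  fixes e e' :: "'n \<Rightarrow> ereal"
  assumes chain: "is_chain (expand_set A' B, expand_rel A' r' B s) C"
    and nonneg: "\<forall>a\<in>bas T. 0 \<le> e a"
    and agree: "\<And>a. a \<noteq> v \<Longrightarrow> e' a = e a"
    and inner_time: "v \<in> A' \<Longrightarrow> attack_time (B, s) e \<le> e' v"
  shows "sum e C \<le> sum e' (collapse B ` C)"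
proof -
  have C: "C \<subseteq> expand_set A' B" using chain by (simp add: is_chain_def)
  hence "finite C" "v \<notin> C"
    using finite_bas(1) outer_subset inner_subset v_notin_expand_set
    by (auto simp: expand_set_def intro: rev_finite_subset)
  have off_B: "sum e (C - B) = sum e' (C - B)"
    by (intro sum.cong refl) (metis DiffD1 \<open>v \<notin> C\<close> agree)
  show ?thesis
  proof (cases "C \<inter> B = {}")
    case True
    hence "collapse B ` C = C" by (auto simp: collapse_def)
    thus ?thesis using off_B True by (simp add: Diff_triv)
  next
    case False
    hence "v \<in> A'" using inner_nonempty by blast
    have "finite B" "\<forall>a\<in>B. 0 \<le> e a" using finite_bas(1) inner_subset nonneg
      by (auto intro: rev_finite_subset)
    hence "sum e (C \<inter> B) \<le> attack_time (B, s) e"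
      using chain_sum_le_attack_time[of "(B, s)"] expand_chain_inner[OF chain] by simp
    also have "\<dots> \<le> e' v" using inner_time \<open>v \<in> A'\<close> .
    finally have on_B: "sum e (C \<inter> B) \<le> e' v" .
    have "sum e C = sum e (C - B) + sum e (C \<inter> B)"
      using \<open>finite C\<close> by (metis add.commute sum.Int_Diff)
    also have "\<dots> \<le> sum e' (C - B) + e' v" using off_B on_B by (simp add: add_left_mono)
    also have "\<dots> = sum e' (insert v (C - B))"
      using \<open>finite C\<close> \<open>v \<notin> C\<close> by (simp add: add.commute)
    also have "insert v (C - B) = collapse B ` C" using False by (auto simp: collapse_def)
    finally show ?thesis .
  qed
qed

end

context
  fixes d :: "'n \<Rightarrow> real"
  assumes d_nonneg: "\<forall>a\<in>bas T. 0 \<le> d a"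
begin

abbreviation dur :: "'n \<Rightarrow> ereal" where "dur \<equiv> \<lambda>a. ereal (d a)"
abbreviation cdur :: "'n \<Rightarrow> ereal" where "cdur \<equiv> contract_dur T d v"

lemma cdur_v: "cdur v = min_time Tv dur"
  by (simp add: contract_dur_def)

lemma cdur_other: "a \<noteq> v \<Longrightarrow> cdur a = dur a"
  by (simp add: contract_dur_def)

lemma successful_finite_nonneg:
  assumes "(A, r) \<in> successful T"
  shows "finite A" "\<forall>a\<in>A. 0 \<le> dur a"
  using successfulD(1)[OF assms] finite_bas(1) d_nonneg by (auto intro: rev_finite_subset)

lemma successful_contract_finite_nonneg:
  assumes "(A', r') \<in> successful Tc"
  shows "finite A'" "\<forall>a\<in>A'. 0 \<le> cdur a"
proof -
  have A': "A' \<subseteq> insert v (bas T - D)" using successfulD(1)[OF assms] by (simp add: bas_Tc)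
  thus "finite A'" using finite_bas(1) by (auto intro: rev_finite_subset)
  have "0 \<le> min_time Tv dur" using finite_bas(2) d_nonneg by (intro min_time_nonneg) (auto simp: bas_Tv)
  thus "\<forall>a\<in>A'. 0 \<le> cdur a" using A' d_nonneg by (auto simp: contract_dur_def)
qed

lemma contract_time:
  assumes "(A, r) \<in> successful T"
  shows "attack_time (contract_set A r, contract_rel A r) cdur \<le> attack_time (A, r) dur"
proof (rule attack_time_le)
  note A = successful_finite_nonneg[OF assms]
  fix C assume chain: "is_chain (contract_set A r, contract_rel A r) C"
  have C: "C \<subseteq> insert v (A - D)"
    using chain by (auto simp: is_chain_def contract_set_def split: if_splits)
  have off_v: "sum cdur (C - {v}) = sum dur (C - {v})" by (intro sum.cong) (simp_all add: cdur_other)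
  show "sum cdur C \<le> attack_time (A, r) dur"
  proof (cases "v \<in> C")
    case False
    have "sum dur (C - {v}) \<le> attack_time (A, r) dur"
      using A contract_chain_off_v[OF chain] by (intro chain_sum_le_attack_time) simp_all
    thus ?thesis using off_v False by simp
  next
    case True
    hence "reaches T A r v" using chain v_in_D by (auto simp: is_chain_def contract_set_def split: if_splits)
    note restricted = restrict_successful[OF assms this]
    obtain C' where C': "is_chain (A \<inter> D, Restr r (A \<inter> D)) C'"
      "attack_time (A \<inter> D, Restr r (A \<inter> D)) dur = sum dur C'"
      using attack_time_attained[of "(A \<inter> D, Restr r (A \<inter> D))" dur] A(1) by auto
    have "C' \<subseteq> A \<inter> D" using C'(1) by (simp add: is_chain_def)
    hence "finite C'" "(C - {v}) \<inter> C' = {}" "finite (C - {v})"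
      using A(1) C by (auto intro: rev_finite_subset)
    have "sum cdur C = cdur v + sum dur (C - {v})"
      using True \<open>finite (C - {v})\<close> off_v by (simp add: sum.remove)
    also have "cdur v \<le> sum dur C'"
      using min_time_le[OF restricted, of dur] C'(2) by (simp add: cdur_v)
    hence "cdur v + sum dur (C - {v}) \<le> sum dur C' + sum dur (C - {v})" by (rule add_right_mono)
    also have "\<dots> = sum dur (C - {v} \<union> C')"
      using \<open>finite C'\<close> \<open>finite (C - {v})\<close> \<open>(C - {v}) \<inter> C' = {}\<close>
      by (simp add: sum.union_disjoint add.commute)
    also have "\<dots> \<le> attack_time (A, r) dur"
      using A contract_chain_uncontract[OF chain True C'(1)]
      by (intro chain_sum_le_attack_time) simp_all
    finally show ?thesis .
  qed
qed

lemma min_time_contract_le: "min_time Tc cdur \<le> min_time T dur"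
proof (rule min_time_greatest)
  fix O' assume "O' \<in> successful T"
  moreover obtain A r where "O' = (A, r)" by fastforce
  ultimately show "min_time Tc cdur \<le> attack_time O' dur"
    using min_time_le[OF contract_successful] contract_time by (blast intro: order_trans)
qed

lemma attack_time_contract_infinite:
  assumes "(A', r') \<in> successful Tc" "v \<in> A'" "successful Tv = {}"
  shows "attack_time (A', r') cdur = \<infinity>"
proof -
  have "is_chain (A', r') {v}" using assms(2) by (simp add: is_chain_def)
  hence "sum cdur {v} \<le> attack_time (A', r') cdur"
    using successful_contract_finite_nonneg[OF assms(1)]
    by (intro chain_sum_le_attack_time) simp_all
  thus ?thesis using min_time_empty[OF assms(3)] by (simp add: cdur_v)
qed

lemma expand_time:
  assumes "(A', r') \<in> successful Tc" "is_attack Tv (B, s)"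
    and "B \<noteq> {} \<Longrightarrow> v \<in> A'" "v \<in> A' \<Longrightarrow> reaches Tv B s v"
    and "v \<in> A' \<Longrightarrow> attack_time (B, s) dur \<le> cdur v"
  shows "min_time T dur \<le> attack_time (A', r') cdur"
proof -
  note expansion = assms(1-4)
  have "min_time T dur \<le> attack_time (expand_set A' B, expand_rel A' r' B s) dur"
    by (rule min_time_le[OF expand_successful[OF expansion]])
  also have "\<dots> \<le> attack_time (A', r') cdur"
  proof (rule attack_time_le)
    fix C assume chain: "is_chain (expand_set A' B, expand_rel A' r' B s) C"
    have "sum dur C \<le> sum cdur (collapse B ` C)"
      using d_nonneg cdur_other assms(5) by (intro expand_sum_le[OF expansion chain]) simp_all
    also have "\<dots> \<le> attack_time (A', r') cdur"
      using successful_contract_finite_nonneg[OF assms(1)] expand_chain_collapse[OF expansion chain]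
      by (intro chain_sum_le_attack_time) simp_all
    finally show "sum dur C \<le> attack_time (A', r') cdur" .
  qed
  finally show ?thesis .
qed

lemma min_time_le_contract: "min_time T dur \<le> min_time Tc cdur"
proof (rule min_time_greatest)
  fix O' assume "O' \<in> successful Tc"
  moreover obtain A' r' where O': "O' = (A', r')" by fastforce
  ultimately have outer: "(A', r') \<in> successful Tc" by simp
  show "min_time T dur \<le> attack_time O' cdur"
  proof (cases "v \<in> A'")
    case False
    have "is_attack Tv ({}, {})" by (simp add: is_attack_def trans_def)
    thus ?thesis using expand_time[OF outer] False O' by simp
  next
    case True
    show ?thesis
    proof (cases "successful Tv = {}")
      case True
      thus ?thesis using attack_time_contract_infinite[OF outer \<open>v \<in> A'\<close>] O' by simp
    next
      case False
      then obtain B s where inner: "(B, s) \<in> successful Tv" "attack_time (B, s) dur = cdur v"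
        using min_time_attained[OF finite_bas(2) False, of dur] by (metis cdur_v surj_pair)
      have "is_attack Tv (B, s)" "reaches Tv B s v" using inner(1) by (simp_all add: successful_def)
      thus ?thesis using expand_time[OF outer] inner(2) O' \<open>v \<in> A'\<close> by simp
    qed
  qed
qed

end

end

theorem mainTheorem9:
  fixes T :: "'n dat" and d :: "'n \<Rightarrow> real" and v :: 'n
  assumes "is_dat T"
    and "\<forall>a\<in>bas T. d a \<ge> 0"
    and "is_module T v"
  shows "min_time T (\<lambda>a. ereal (d a)) = min_time (contract T v) (contract_dur T d v)"
proof -
  interpret dat_module T v using assms(1,3) by unfold_locales
  show ?thesis
    using min_time_le_contract[OF assms(2)] min_time_contract_le[OF assms(2)] by (rule antisym)
qed

end
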